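(* Let $\mathcal{A}$ be a finite nonempty set of strata with $|\mathcal{A}| = r$. For each $j \in \mathcal{A}$ let $a_j = n_j\sigma_j > 0$ and let $s_j > 0$ be the current sample size of stratum $j$. Let $M$ be a real number with $0 < M \le \sum_{j\in\mathcal{A}} s_j$. Run the procedure $\mathrm{SSR}(\mathcal{A}, M, \mathcal{L})$ defined in the context. Then the procedure terminates, and the resulting values $(\mathcal{L}[j])_{j\in\mathcal{A}}$ form an optimal solution of the problem $$\text{minimize } \sum_{j\in\mathcal{A}} \frac{n_j^2\sigma_j^2}{x_j} \quad\text{subject to } 0 \le x_j \le s_j \ (j\in\mathcal{A}),\quad \sum_{j\in\mathcal{A}} x_j = M,$$ over real vectors $(x_j)_{j\in\mathcal{A}}$; i.e. $\mathcal{L}$ is a variance-optimal reduction of the stratified random sample to total size $M$. Moreover, the worst-case running time of $\mathrm{SSR}$ is $O(r^2)$.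
   Context: Setting: a data set of $n$ real values is partitioned into strata; stratum $j$ contains $n_j$ values with (population) standard deviation $\sigma_j$. A stratified random sample holds $s_j$ values drawn uniformly without replacement from stratum $j$. The variance of the estimator $\bar y=\frac1n\sum_j n_j\bar y_j$ of the population mean (where $\bar y_j$ is the mean of the sample of stratum $j$) is $V = \frac{1}{n^2}\sum_j \frac{n_j^2\sigma_j^2}{s_j} - \frac{1}{n^2}\sum_j n_j\sigma_j^2$; since the second term does not depend on the sample sizes, reducing the total sample size to $M$ with minimum increase of $V$ ("variance-optimal sample size reduction") is the optimization problem in the claim. Procedure $\mathrm{SSR}(\mathcal{A}, M, \mathcal{L})$ (writes into an array $\mathcal{L}$ indexed by strata): 1. Set $\mathcal{O} \gets \emptyset$. 2. For each $j\in\mathcal{A}$: set $M_j \gets M\cdot n_j\sigma_j / \sum_{t\in\mathcal{A}} n_t\sigma_t$ (the Neyman allocation of budget $M$ among $\mathcal{A}$); if $s_j > M_j$ then add $j$ to $\mathcal{O}$ (stratum $j$ is "oversized"), else set $\mathcal{L}[j] \gets s_j$. 3. If $\mathcal{O} = \mathcal{A}$, set $\mathcal{L}[j] \gets M_j$ for all $j\in\mathcal{A}$ and stop. 4. Otherwise call $\mathrm{SSR}(\mathcal{O},\, M - \sum_{j\in\mathcal{A}\setminus\mathcal{O}} s_j,\, \mathcal{L})$. *)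

theory Defs
  imports Complex_Main "HOL-Library.Extended_Real"
begin

text \<open>The weight a j stands for n_j sigma_j, s j is the
current sample size of stratum j, L is the output array. The procedure returns the
final array together with the number of elementary steps performed: each call
costs card A + 1 steps (computing the Neyman allocation for all strata of A and
testing each of them, plus constant overhead). Termination of the procedure
is expressed by the domain predicate SSR_dom.\<close>

function SSR :: "('a \<Rightarrow> real) \<Rightarrow> ('a \<Rightarrow> nat) \<Rightarrow> 'a set \<Rightarrow> real \<Rightarrow> ('a \<Rightarrow> real)
                 \<Rightarrow> ('a \<Rightarrow> real) \<times> nat" where
  "SSR a s A M L =
     (let T = (\<Sum>t\<in>A. a t);
          Mj = (\<lambda>j. M * a j / T);
          Ov = {j\<in>A. real (s j) > Mj j};
          L' = (\<lambda>j. if j \<in> A - Ov then real (s j) else L j)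
      in if Ov = A
         then ((\<lambda>j. if j \<in> A then Mj j else L' j), card A + 1)
         else (fst (SSR a s Ov (M - (\<Sum>j\<in>A - Ov. real (s j))) L'),
               snd (SSR a s Ov (M - (\<Sum>j\<in>A - Ov. real (s j))) L') + card A + 1))"
  by pat_completeness auto

definition ssr_feasible :: "('a \<Rightarrow> nat) \<Rightarrow> 'a set \<Rightarrow> real \<Rightarrow> ('a \<Rightarrow> real) \<Rightarrow> bool" where
  "ssr_feasible s A M x \<longleftrightarrow>
     (\<forall>j\<in>A. 0 \<le> x j \<and> x j \<le> real (s j)) \<and> (\<Sum>j\<in>A. x j) = M"

text \<open>Objective sum of (n_j sigma_j)^2 / x_j, with value +infinity when some x_j = 0
(since a_j > 0).\<close>
definition ssr_obj :: "('a \<Rightarrow> real) \<Rightarrow> 'a set \<Rightarrow> ('a \<Rightarrow> real) \<Rightarrow> ereal" where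
  "ssr_obj a A x = (\<Sum>j\<in>A. if x j = 0 then \<infinity> else ereal ((a j)^2 / x j))"

definition ssr_optimal :: "('a \<Rightarrow> real) \<Rightarrow> ('a \<Rightarrow> nat) \<Rightarrow> 'a set \<Rightarrow> real \<Rightarrow> ('a \<Rightarrow> real) \<Rightarrow> bool" where
  "ssr_optimal a s A M x \<longleftrightarrow>
     ssr_feasible s A M x \<and> (\<forall>y. ssr_feasible s A M y \<longrightarrow> ssr_obj a A x \<le> ssr_obj a A y)"

end

(* A feasible x with x j = min (\<mu> * a j) (s j) for one \<mu> > 0 is optimal. The terms a\<^sup>2/x are
   convex; at such an x their slopes -a\<^sup>2/x\<^sup>2 equal -1/\<mu>\<^sup>2 where the cap is inactive and are at
   most -1/\<mu>\<^sup>2 where it is active, and there a feasible coordinate can only decrease. Summing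
   the tangent lines therefore bounds the objective at any feasible y from below by the
   objective at x, since both vectors have total M.
   SSR produces such an x. With q = M / sum a A, each stratum that is not oversized has
   s j \<le> q * a j, and the residual budget left for the oversized strata is at least their
   Neyman share q * sum a Ov; so the multiplier of the recursive call is at least q and the
   strata fixed at s j stay capped. Each call removes a stratum and costs card A + 1 steps,
   whence the quadratic bound. *)

theory Submission
  imports Defs
begin

definition oversized :: "('a \<Rightarrow> real) \<Rightarrow> ('a \<Rightarrow> nat) \<Rightarrow> 'a set \<Rightarrow> real \<Rightarrow> 'a set" where
  "oversized a s A M = {j\<in>A. M * a j / sum a A < real (s j)}"

definition residual_budget :: "('a \<Rightarrow> real) \<Rightarrow> ('a \<Rightarrow> nat) \<Rightarrow> 'a set \<Rightarrow> real \<Rightarrow> real" where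
  "residual_budget a s A M = M - (\<Sum>j\<in>A - oversized a s A M. real (s j))"

definition keep_undersized ::
    "('a \<Rightarrow> real) \<Rightarrow> ('a \<Rightarrow> nat) \<Rightarrow> 'a set \<Rightarrow> real \<Rightarrow> ('a \<Rightarrow> real) \<Rightarrow> 'a \<Rightarrow> real" where
  "keep_undersized a s A M L = (\<lambda>j. if j \<in> A - oversized a s A M then real (s j) else L j)"

lemma oversized_subset: "oversized a s A M \<subseteq> A"
  by (auto simp: oversized_def)

lemma card_oversized_less:
  "finite A \<Longrightarrow> oversized a s A M \<noteq> A \<Longrightarrow> card (oversized a s A M) < card A"
  by (metis oversized_subset psubsetI psubset_card_mono)

lemma SSR_induct [consumes 1, case_names step]:
  assumes "finite A"
    and "\<And>A M L. finite A \<Longrightarrow>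
      (oversized a s A M \<noteq> A \<Longrightarrow>
         P (oversized a s A M) (residual_budget a s A M) (keep_undersized a s A M L)) \<Longrightarrow>
      P A M L"
  shows "P A M L"
  using assms(1)
proof (induction A arbitrary: M L rule: measure_induct_rule[of card])
  case (less A)
  show ?case
    by (rule assms(2)[OF less.prems],
        rule less.IH[OF card_oversized_less[OF less.prems] finite_subset[OF oversized_subset less.prems]])
qed

lemma SSR_domI:
  assumes "oversized a s A M \<noteq> A \<Longrightarrow>
    SSR_dom (a, s, oversized a s A M, residual_budget a s A M, keep_undersized a s A M L)"
  shows "SSR_dom (a, s, A, M, L)"
  apply (rule accp.accI)
  apply (erule SSR_rel.cases)
  using assms by (auto simp: oversized_def residual_budget_def keep_undersized_def)

lemma SSR_dom_finite: "finite A \<Longrightarrow> SSR_dom (a, s, A, M, L)"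
  by (induction A M L rule: SSR_induct[where a = a and s = s]) (rule SSR_domI)

lemma SSR_unfold:
  assumes "finite A"
  shows "SSR a s A M L =
    (if oversized a s A M = A
     then ((\<lambda>j. if j \<in> A then M * a j / sum a A
                else if j \<in> A - oversized a s A M then real (s j) else L j), card A + 1)
     else (fst (SSR a s (oversized a s A M) (residual_budget a s A M) (keep_undersized a s A M L)),
           snd (SSR a s (oversized a s A M) (residual_budget a s A M) (keep_undersized a s A M L))
             + card A + 1))"
  unfolding SSR.psimps[OF SSR_dom_finite[OF assms(1), of a s M L]] Let_def
    oversized_def[symmetric] residual_budget_def[symmetric] keep_undersized_def[symmetric]
  by (rule refl)

lemma SSR_all_oversized:
  assumes "finite A" and "oversized a s A M = A"
  shows "SSR a s A M L = ((\<lambda>j. if j \<in> A then M * a j / sum a A else L j), card A + 1)"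
  unfolding SSR_unfold[OF assms(1)] if_P[OF assms(2)] Diff_eq_empty_iff[THEN iffD2, OF equalityD2[OF assms(2)]]
    empty_iff if_False
  by (rule refl)

lemma SSR_recurse:
  assumes "finite A" and "oversized a s A M \<noteq> A"
  shows "SSR a s A M L = apsnd (\<lambda>k. k + card A + 1)
    (SSR a s (oversized a s A M) (residual_budget a s A M) (keep_undersized a s A M L))"
  unfolding SSR_unfold[OF assms(1)] if_not_P[OF assms(2)] apsnd_def map_prod_def split_beta id_def
  by (rule refl)

lemma SSR_steps_le: "finite A \<Longrightarrow> snd (SSR a s A M L) \<le> (card A + 1)\<^sup>2"
proof (induction A M L rule: SSR_induct[where a = a and s = s])
  case (step A M L)
  show ?case
  proof (cases "oversized a s A M = A")
    case True
    then show ?thesis by (simp add: SSR_all_oversized[OF step.hyps True] power2_eq_square)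
  next
    case False
    have "snd (SSR a s A M L)
        = snd (SSR a s (oversized a s A M) (residual_budget a s A M) (keep_undersized a s A M L))
          + card A + 1"
      by (simp add: SSR_recurse[OF step.hyps False])
    also have "\<dots> \<le> (card (oversized a s A M) + 1)\<^sup>2 + card A + 1"
      using step.IH[OF False] by simp
    also have "\<dots> \<le> (card A)\<^sup>2 + card A + 1"
      using card_oversized_less[OF step.hyps False] by (simp add: power_mono)
    also have "\<dots> \<le> (card A + 1)\<^sup>2"
      by (simp add: power2_eq_square)
    finally show ?thesis .
  qed
qed

lemma SSR_outside: "finite A \<Longrightarrow> j \<notin> A \<Longrightarrow> fst (SSR a s A M L) j = L j"
proof (induction A M L rule: SSR_induct[where a = a and s = s])
  case (step A M L)
  show ?case
  proof (cases "oversized a s A M = A")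
    case True
    then show ?thesis using step.prems by (simp add: SSR_all_oversized[OF step.hyps True])
  next
    case False
    have "j \<notin> oversized a s A M"
      by (rule contra_subsetD[OF oversized_subset step.prems])
    then show ?thesis
      using step.IH[OF False] step.prems by (simp add: SSR_recurse[OF step.hyps False] keep_undersized_def)
  qed
qed

lemma not_oversized_le:
  "j \<in> A - oversized a s A M \<Longrightarrow> real (s j) \<le> M / sum a A * a j"
  by (simp add: oversized_def not_less)

lemma residual_budget_ge:
  assumes "finite A" and "sum a A \<noteq> 0"
  shows "M / sum a A * sum a (oversized a s A M) \<le> residual_budget a s A M"
proof -
  define q where "q = M / sum a A"
  define Ov where "Ov = oversized a s A M"
  have "(\<Sum>j\<in>A - Ov. real (s j)) \<le> q * sum a (A - Ov)"
    unfolding sum_distrib_left q_def Ov_def by (rule sum_mono) (rule not_oversized_le)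
  moreover have "sum a A = sum a Ov + sum a (A - Ov)"
    using sum.subset_diff[OF oversized_subset[of a s A M] assms(1), of a] by (simp add: Ov_def)
  moreover have "q * sum a A = M"
    using assms(2) by (simp add: q_def)
  ultimately show ?thesis
    unfolding residual_budget_def q_def[symmetric] Ov_def[symmetric] by (simp add: distrib_left)
qed

lemma residual_budget_le:
  assumes "finite A" and "M \<le> (\<Sum>j\<in>A. real (s j))"
  shows "residual_budget a s A M \<le> (\<Sum>j\<in>oversized a s A M. real (s j))"
  using assms(2) sum.subset_diff[OF oversized_subset[of a s A M] assms(1), of "\<lambda>j. real (s j)"]
  unfolding residual_budget_def by linarith

definition capped_proportional ::
    "('a \<Rightarrow> real) \<Rightarrow> ('a \<Rightarrow> nat) \<Rightarrow> 'a set \<Rightarrow> real \<Rightarrow> ('a \<Rightarrow> real) \<Rightarrow> bool" where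
  "capped_proportional a s A \<mu> x \<longleftrightarrow> (\<forall>j\<in>A. x j = min (\<mu> * a j) (real (s j)))"

lemma capped_proportional_extend:
  assumes "capped_proportional a s B \<mu> x" and "q \<le> \<mu>" and "\<forall>j\<in>A. 0 \<le> a j"
    and "\<And>j. j \<in> A - B \<Longrightarrow> x j = real (s j) \<and> real (s j) \<le> q * a j"
  shows "capped_proportional a s (A \<union> B) \<mu> x"
  unfolding capped_proportional_def
proof
  fix j assume "j \<in> A \<union> B"
  show "x j = min (\<mu> * a j) (real (s j))"
  proof (cases "j \<in> B")
    case True
    then show ?thesis using assms(1) by (simp add: capped_proportional_def)
  next
    case False
    with \<open>j \<in> A \<union> B\<close> have "j \<in> A" by simp
    then have "q * a j \<le> \<mu> * a j"
      using assms(2,3) by (simp add: mult_right_mono)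
    then show ?thesis
      using assms(4)[of j] \<open>j \<in> A\<close> False by simp
  qed
qed

lemma SSR_all_oversized_capped:
  assumes "finite A" and "oversized a s A M = A" and "sum a A \<noteq> 0"
  shows "capped_proportional a s A (M / sum a A) (fst (SSR a s A M L))"
    and "(\<Sum>j\<in>A. fst (SSR a s A M L) j) = M"
proof -
  show "capped_proportional a s A (M / sum a A) (fst (SSR a s A M L))"
    unfolding capped_proportional_def
  proof
    fix j assume "j \<in> A"
    then have "j \<in> oversized a s A M"
      using assms(2) by simp
    then show "fst (SSR a s A M L) j = min (M / sum a A * a j) (real (s j))"
      using \<open>j \<in> A\<close> by (simp add: SSR_all_oversized[OF assms(1,2)] oversized_def)
  qed
  show "(\<Sum>j\<in>A. fst (SSR a s A M L) j) = M"
    using assms(3)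
    by (simp add: SSR_all_oversized[OF assms(1,2)] flip: sum_divide_distrib sum_distrib_left)
qed

lemma SSR_not_oversized:
  assumes "finite A" and "j \<in> A - oversized a s A M"
  shows "fst (SSR a s A M L) j = real (s j)"
proof -
  have "oversized a s A M \<noteq> A"
    using assms(2) by blast
  then show ?thesis
    using SSR_outside[OF finite_subset[OF oversized_subset assms(1)], of j a s] assms(2)
    by (simp add: SSR_recurse[OF assms(1)] keep_undersized_def)
qed

lemma SSR_capped_proportional:
  assumes "finite A" and "A \<noteq> {}" and "\<forall>j\<in>A. 0 < a j"
    and "0 < M" and "M \<le> (\<Sum>j\<in>A. real (s j))"
  shows "\<exists>\<mu> \<ge> M / sum a A. capped_proportional a s A \<mu> (fst (SSR a s A M L))
           \<and> (\<Sum>j\<in>A. fst (SSR a s A M L) j) = M"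
  using assms
proof (induction A M L rule: SSR_induct[where a = a and s = s])
  case (step A M L)
  define q where "q = M / sum a A"
  have "0 < sum a A"
    using step.hyps step.prems(1,2) by (intro sum_pos) auto
  then have "0 < q"
    using step.prems(3) by (simp add: q_def)
  show ?case
  proof (cases "oversized a s A M = A")
    case True
    have "sum a A \<noteq> 0"
      using \<open>0 < sum a A\<close> by simp
    from SSR_all_oversized_capped[OF step.hyps True this] show ?thesis
      by (intro exI[of _ "M / sum a A"] conjI order_refl)
  next
    case False
    define Ov where "Ov = oversized a s A M"
    define M' where "M' = residual_budget a s A M"
    define x where "x = fst (SSR a s A M L)"
    have x_eq: "x = fst (SSR a s Ov M' (keep_undersized a s A M L))"
      by (simp add: SSR_recurse[OF step.hyps False] x_def Ov_def M'_def)
    have "Ov \<subseteq> A" and "finite Ov"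
      unfolding Ov_def by (rule oversized_subset, rule finite_subset[OF oversized_subset step.hyps])
    have M'_ge: "q * sum a Ov \<le> M'"
      unfolding q_def Ov_def M'_def using \<open>0 < sum a A\<close> by (intro residual_budget_ge step.hyps) simp
    have M'_le: "M' \<le> (\<Sum>j\<in>Ov. real (s j))"
      unfolding Ov_def M'_def using step.hyps step.prems(4) by (rule residual_budget_le)
    obtain \<mu> where "q \<le> \<mu>" and capped_Ov: "capped_proportional a s Ov \<mu> x"
      and sum_Ov: "(\<Sum>j\<in>Ov. x j) = M'"
    proof (cases "Ov = {}")
      case True
      then show ?thesis
        using that[of q] M'_ge M'_le by (simp add: capped_proportional_def)
    next
      case False
      have sum_a_Ov: "0 < sum a Ov"
        using \<open>finite Ov\<close> False \<open>Ov \<subseteq> A\<close> step.prems(2) by (intro sum_pos) auto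
      then have "0 < M'"
        using M'_ge \<open>0 < q\<close> by (smt (verit) mult_pos_pos)
      then obtain \<mu> where "M' / sum a Ov \<le> \<mu>" and "capped_proportional a s Ov \<mu> x"
        and "(\<Sum>j\<in>Ov. x j) = M'"
        using step.IH[OF \<open>oversized a s A M \<noteq> A\<close>] False \<open>Ov \<subseteq> A\<close> step.prems(2) M'_le
        unfolding x_eq Ov_def M'_def by blast
      moreover have "q \<le> M' / sum a Ov"
        using M'_ge sum_a_Ov by (simp add: pos_le_divide_eq)
      ultimately show ?thesis
        by (intro that[of \<mu>]) simp_all
    qed
    have not_Ov: "x j = real (s j) \<and> real (s j) \<le> q * a j" if "j \<in> A - Ov" for j
      using SSR_not_oversized[OF step.hyps that[unfolded Ov_def], of L] not_oversized_le[of j A a s M] that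
      unfolding x_def q_def Ov_def by simp
    have "\<forall>j\<in>A. 0 \<le> a j"
      using step.prems(2) by (simp add: less_imp_le)
    from capped_proportional_extend[OF capped_Ov \<open>q \<le> \<mu>\<close> this not_Ov]
    have "capped_proportional a s A \<mu> x"
      using \<open>Ov \<subseteq> A\<close> by (simp add: Un_absorb2)
    moreover have "(\<Sum>j\<in>A. x j) = (\<Sum>j\<in>A - Ov. real (s j)) + M'"
      using sum.subset_diff[OF \<open>Ov \<subseteq> A\<close> step.hyps, of x] not_Ov sum_Ov by simp
    then have "(\<Sum>j\<in>A. x j) = M"
      by (simp add: M'_def residual_budget_def Ov_def)
    ultimately show ?thesis
      using \<open>q \<le> \<mu>\<close> unfolding x_def q_def by blast
  qed
qed

lemma ssr_obj_eq_sum: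
  "(\<And>j. j \<in> A \<Longrightarrow> x j \<noteq> 0) \<Longrightarrow> ssr_obj a A x = ereal (\<Sum>j\<in>A. (a j)\<^sup>2 / x j)"
  unfolding ssr_obj_def sum_ereal[symmetric] by (rule sum.cong) simp_all

lemma ssr_obj_eq_infinity:
  assumes "finite A" and "\<And>i. i \<in> A \<Longrightarrow> 0 \<le> x i" and "j \<in> A" and "x j = 0"
  shows "ssr_obj a A x = \<infinity>"
proof -
  define f where "f i = (if x i = 0 then \<infinity> else ereal ((a i)\<^sup>2 / x i))" for i
  have "0 \<le> (\<Sum>i\<in>A - {j}. f i)"
    using assms(2) by (intro sum_nonneg) (simp add: f_def)
  moreover have "ssr_obj a A x = f j + (\<Sum>i\<in>A - {j}. f i)"
    unfolding ssr_obj_def f_def[symmetric] using sum.remove[OF assms(1,3)] .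
  ultimately show ?thesis
    using assms(4) by (simp add: f_def)
qed

lemma inverse_tangent_le:
  fixes c x y :: real
  assumes "0 < x" and "0 < y" and "0 \<le> c"
  shows "c / x - c / x\<^sup>2 * (y - x) \<le> c / y"
proof -
  have "c / y - (c / x - c / x\<^sup>2 * (y - x)) = c * (y - x)\<^sup>2 / (x\<^sup>2 * y)"
    using assms by (simp add: field_simps power2_eq_square)
  also have "\<dots> \<ge> 0"
    using assms by simp
  finally show ?thesis by simp
qed

lemma capped_tangent_le:
  fixes a s x y \<mu> :: real
  assumes "0 < a" and "0 < \<mu>" and "0 < x" and "0 < y" and "y \<le> s"
    and x: "x = min (\<mu> * a) s"
  shows "a\<^sup>2 / x - (y - x) / \<mu>\<^sup>2 \<le> a\<^sup>2 / y"
proof -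
  have "a\<^sup>2 / x\<^sup>2 * (y - x) \<le> (y - x) / \<mu>\<^sup>2"
  proof (cases "\<mu> * a \<le> s")
    case True
    then have "a\<^sup>2 / x\<^sup>2 = 1 / \<mu>\<^sup>2"
      using x assms(1,2) by (simp add: power_mult_distrib)
    then show ?thesis by simp
  next
    case False
    then have "x = s" and "y - x \<le> 0"
      using x assms(5) by auto
    have "x\<^sup>2 \<le> (\<mu> * a)\<^sup>2"
      using False \<open>x = s\<close> assms(3) by (intro power_mono) auto
    then have "1 / \<mu>\<^sup>2 \<le> a\<^sup>2 / x\<^sup>2"
      using assms(1-3) by (simp add: field_simps power_mult_distrib)
    from mult_right_mono_neg[OF this \<open>y - x \<le> 0\<close>] show ?thesis
      by simp
  qed
  then show ?thesis
    using inverse_tangent_le[OF assms(3,4), of "a\<^sup>2"] by simp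
qed

lemma capped_proportional_optimal:
  assumes "finite A" and pos: "\<forall>j\<in>A. 0 < a j \<and> 0 < s j" and "0 < \<mu>"
    and capped: "capped_proportional a s A \<mu> x" and sum_x: "(\<Sum>j\<in>A. x j) = M"
  shows "ssr_optimal a s A M x"
proof -
  have x: "x j = min (\<mu> * a j) (real (s j))" if "j \<in> A" for j
    using capped that by (simp add: capped_proportional_def)
  have x_pos: "0 < x j" if "j \<in> A" for j
    using x[OF that] pos that \<open>0 < \<mu>\<close> by simp
  have "ssr_feasible s A M x"
    unfolding ssr_feasible_def using x x_pos sum_x by (simp add: less_imp_le)
  moreover have "ssr_obj a A x \<le> ssr_obj a A y" if y: "ssr_feasible s A M y" for y
  proof (cases "\<forall>j\<in>A. 0 < y j")
    case True
    have "(\<Sum>j\<in>A. (a j)\<^sup>2 / x j) = (\<Sum>j\<in>A. (a j)\<^sup>2 / x j - (y j - x j) / \<mu>\<^sup>2)"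
      using y sum_x by (simp add: ssr_feasible_def sum_subtractf flip: sum_divide_distrib)
    also have "\<dots> \<le> (\<Sum>j\<in>A. (a j)\<^sup>2 / y j)"
      using y pos True x_pos \<open>0 < \<mu>\<close>
      by (intro sum_mono capped_tangent_le[OF _ _ _ _ _ x]) (auto simp: ssr_feasible_def)
    finally have "(\<Sum>j\<in>A. (a j)\<^sup>2 / x j) \<le> (\<Sum>j\<in>A. (a j)\<^sup>2 / y j)" .
    moreover have "ssr_obj a A x = ereal (\<Sum>j\<in>A. (a j)\<^sup>2 / x j)"
      using x_pos by (intro ssr_obj_eq_sum) force
    moreover have "ssr_obj a A y = ereal (\<Sum>j\<in>A. (a j)\<^sup>2 / y j)"
      using True by (intro ssr_obj_eq_sum) force
    ultimately show ?thesis
      by simp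
  next
    case False
    then obtain j where "j \<in> A" and "y j = 0"
      using y by (force simp: ssr_feasible_def)
    then show ?thesis
      using y assms(1) by (simp add: ssr_obj_eq_infinity ssr_feasible_def)
  qed
  ultimately show ?thesis
    unfolding ssr_optimal_def by blast
qed

theorem theorem1:
  shows "(\<forall>(A::'a set) a s (M::real) L.
            finite A \<and> A \<noteq> {} \<and> (\<forall>j\<in>A. a j > 0 \<and> s j > 0) \<and>
            0 < M \<and> M \<le> (\<Sum>j\<in>A. real (s j)) \<longrightarrow>
              SSR_dom (a, s, A, M, L) \<and> ssr_optimal a s A M (fst (SSR a s A M L)))
       \<and> (\<exists>C::real. \<forall>(A::'a set) a s (M::real) L.
            finite A \<and> A \<noteq> {} \<and> (\<forall>j\<in>A. a j > 0 \<and> s j > 0) \<and>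
            0 < M \<and> M \<le> (\<Sum>j\<in>A. real (s j)) \<longrightarrow>
              real (snd (SSR a s A M L)) \<le> C * real (card A) ^ 2)"
proof (intro conjI allI impI exI[of _ 4])
  fix A :: "'a set" and a :: "'a \<Rightarrow> real" and s M L
  assume h: "finite A \<and> A \<noteq> {} \<and> (\<forall>j\<in>A. a j > 0 \<and> s j > 0) \<and>
    0 < M \<and> M \<le> (\<Sum>j\<in>A. real (s j))"
  then show "SSR_dom (a, s, A, M, L)"
    by (simp add: SSR_dom_finite)
  obtain \<mu> where "M / sum a A \<le> \<mu>" and "capped_proportional a s A \<mu> (fst (SSR a s A M L))"
    and "(\<Sum>j\<in>A. fst (SSR a s A M L) j) = M"
    using SSR_capped_proportional[of A a M s L] h by auto
  moreover have "0 < M / sum a A"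
    using h by (simp add: sum_pos)
  ultimately show "ssr_optimal a s A M (fst (SSR a s A M L))"
    using h by (intro capped_proportional_optimal) auto
next
  fix A :: "'a set" and a :: "'a \<Rightarrow> real" and s M L
  assume h: "finite A \<and> A \<noteq> {} \<and> (\<forall>j\<in>A. a j > 0 \<and> s j > 0) \<and>
    0 < M \<and> M \<le> (\<Sum>j\<in>A. real (s j))"
  then have "1 \<le> card A"
    by (simp add: Suc_le_eq card_gt_0_iff)
  have "real (snd (SSR a s A M L)) \<le> (real (card A) + 1)\<^sup>2"
    using SSR_steps_le[of A a s M L] h by (metis of_nat_1 of_nat_add of_nat_le_iff of_nat_power)
  also have "\<dots> \<le> (2 * real (card A))\<^sup>2"
    using \<open>1 \<le> card A\<close> by (intro power_mono) auto
  finally show "real (snd (SSR a s A M L)) \<le> 4 * real (card A) ^ 2"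
    by (simp add: power_mult_distrib)
qed

end
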